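(* Let $n\ge 1$, $1\le d\le n$, and let $\mathcal{A}\subseteq\{0,1\}^n$ be nonempty. Then \[ A(n,d;\mathcal{A})\le \big(\mathrm{OPT}(\mathsf{Del}(n,d;\mathcal{A}))\big)^{1/2}. \]
   Context: Fourier transform: $\widehat{f}(\mathbf{s})=2^{-n}\sum_{\mathbf{x}\in\{0,1\}^n}f(\mathbf{x})(-1)^{\mathbf{x}\cdot\mathbf{s}}$. Convolution: $(f\star g)(\mathbf{x})=2^{-n}\sum_{\mathbf{z}\in\{0,1\}^n}f(\mathbf{z})g(\mathbf{x}+\mathbf{z})$, with addition over $\mathbb{F}_2^n$. $w(\mathbf{x})$ is the Hamming weight, $d(\cdot,\cdot)$ the Hamming distance; the minimum distance of a code (nonempty subset of $\{0,1\}^n$) is the minimum distance between distinct codewords (taken as $+\infty$ for a single codeword). $A(n,d;\mathcal{A})$ is the maximum of $|\mathcal{C}|$ over codes $\mathcal{C}\subseteq\mathcal{A}$ of minimum distance at least $d$. For an LP $\mathsf{L}$, $\mathrm{OPT}(\mathsf{L})$ is its optimal value. $\mathsf{Del}(n,d)$ is the LP: maximize $\sum_{\mathbf{x}}f(\mathbf{x})$ over $f:\{0,1\}^n\to\mathbb{R}$ subject to (C1) $f(\mathbf{x})\ge0$ for all $\mathbf{x}$; (C2) $\widehat f(\mathbf{s})\ge0$ for all $\mathbf{s}$; (C3) $f(\mathbf{x})=0$ whenever $1\le w(\mathbf{x})\le d-1$; (C4) $f(0^n)=1$. $\mathsf{Del}(n,d;\mathcal{A})$ is the LP: maximize $\sum_{\mathbf{x}}f(\mathbf{x})$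 over $f:\{0,1\}^n\to\mathbb{R}$ subject to (D1) $f(\mathbf{x})\ge 0$ for all $\mathbf{x}$; (D2) $\widehat f(\mathbf{s})\ge0$ for all $\mathbf{s}$; (D3) $f(\mathbf{x})=0$ whenever $1\le w(\mathbf{x})\le d-1$; (D4) $f(0^n)\le\mathrm{OPT}(\mathsf{Del}(n,d))$; (D5) $f(\mathbf{x})\le 2^n(\mathds{1}_{\mathcal{A}}\star\mathds{1}_{\mathcal{A}})(\mathbf{x})=\sum_{\mathbf{z}}\mathds{1}_{\mathcal{A}}(\mathbf{z})\mathds{1}_{\mathcal{A}}(\mathbf{x}+\mathbf{z})$ for all $\mathbf{x}$. *)

theory Defs
  imports Complex_Main "HOL-Library.Indicator_Function"
begin

text \<open>Binary vectors in {0,1}^n are represented by their supports: subsets of {..<n}.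
  Addition over F_2^n is symmetric difference, x.s is card (x \<inter> s) (mod 2 via (-1)^_),
  Hamming weight is card, Hamming distance is card of the symmetric difference.\<close>

definition cube :: "nat \<Rightarrow> nat set set" where
  "cube n = Pow {..<n}"

definition vadd :: "nat set \<Rightarrow> nat set \<Rightarrow> nat set" where
  "vadd x y = (x - y) \<union> (y - x)"

definition weight :: "nat set \<Rightarrow> nat" where
  "weight x = card x"

definition hdist :: "nat set \<Rightarrow> nat set \<Rightarrow> nat" where
  "hdist x y = weight (vadd x y)"

definition fourier :: "nat \<Rightarrow> (nat set \<Rightarrow> real) \<Rightarrow> nat set \<Rightarrow> real" where
  "fourier n f s = (1 / 2 ^ n) * (\<Sum>x\<in>cube n. f x * (-1) ^ card (x \<inter> s))"

definition conv :: "nat \<Rightarrow> (nat set \<Rightarrow> real) \<Rightarrow> (nat set \<Rightarrow> real) \<Rightarrow> nat set \<Rightarrow> real" where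
  "conv n f g x = (1 / 2 ^ n) * (\<Sum>z\<in>cube n. f z * g (vadd x z))"

definition is_code_in :: "nat \<Rightarrow> nat \<Rightarrow> nat set set \<Rightarrow> nat set set \<Rightarrow> bool" where
  "is_code_in n d \<A> C \<longleftrightarrow> C \<noteq> {} \<and> C \<subseteq> \<A> \<and> C \<subseteq> cube n \<and>
     (\<forall>x\<in>C. \<forall>y\<in>C. x \<noteq> y \<longrightarrow> d \<le> hdist x y)"

definition A_code :: "nat \<Rightarrow> nat \<Rightarrow> nat set set \<Rightarrow> nat" where
  "A_code n d \<A> = Max (card ` {C. is_code_in n d \<A> C})"

definition Del_feasible :: "nat \<Rightarrow> nat \<Rightarrow> (nat set \<Rightarrow> real) \<Rightarrow> bool" where
  "Del_feasible n d f \<longleftrightarrow>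
     (\<forall>x\<in>cube n. 0 \<le> f x) \<and>
     (\<forall>s\<in>cube n. 0 \<le> fourier n f s) \<and>
     (\<forall>x\<in>cube n. 1 \<le> weight x \<and> weight x \<le> d - 1 \<longrightarrow> f x = 0) \<and>
     f {} = 1"

definition OPT_Del :: "nat \<Rightarrow> nat \<Rightarrow> real" where
  "OPT_Del n d = Sup ((\<lambda>f. \<Sum>x\<in>cube n. f x) ` {f. Del_feasible n d f})"

definition DelA_feasible :: "nat \<Rightarrow> nat \<Rightarrow> nat set set \<Rightarrow> (nat set \<Rightarrow> real) \<Rightarrow> bool" where
  "DelA_feasible n d \<A> f \<longleftrightarrow>
     (\<forall>x\<in>cube n. 0 \<le> f x) \<and>
     (\<forall>s\<in>cube n. 0 \<le> fourier n f s) \<and>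
     (\<forall>x\<in>cube n. 1 \<le> weight x \<and> weight x \<le> d - 1 \<longrightarrow> f x = 0) \<and>
     f {} \<le> OPT_Del n d \<and>
     (\<forall>x\<in>cube n. f x \<le> 2 ^ n * conv n (indicator \<A>) (indicator \<A>) x)"

definition OPT_DelA :: "nat \<Rightarrow> nat \<Rightarrow> nat set set \<Rightarrow> real" where
  "OPT_DelA n d \<A> = Sup ((\<lambda>f. \<Sum>x\<in>cube n. f x) ` {f. DelA_feasible n d \<A> f})"

end

theory Submission
  imports Defs
begin

text \<open>For a code \<open>C \<subseteq> \<A>\<close> of minimum distance \<open>d\<close>, let \<open>f(x)\<close> count the ordered pairs of
  codewords with sum \<open>x\<close>. Then \<open>f(0) = |C|\<close>, \<open>\<Sum>f = |C|\<^sup>2\<close>, \<open>f\<close> vanishes on weights \<open>1..d-1\<close>, its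
  Fourier transform is a square of a character sum, and \<open>f\<close> is dominated by the autocorrelation
  of \<open>\<A>\<close>. So \<open>f / |C|\<close> is feasible for \<open>Del(n,d)\<close>, giving \<open>|C| \<le> OPT(Del(n,d))\<close>; with this,
  \<open>f\<close> itself is feasible for \<open>Del(n,d;\<A>)\<close>, giving \<open>|C|\<^sup>2 \<le> OPT(Del(n,d;\<A>))\<close>.\<close>

lemma finite_cube[simp]: "finite (cube n)" by (simp add: cube_def)

lemma vadd_cube: "x \<in> cube n \<Longrightarrow> y \<in> cube n \<Longrightarrow> vadd x y \<in> cube n"
  by (auto simp: cube_def vadd_def)

lemma vadd_comm: "vadd x y = vadd y x" by (auto simp: vadd_def)

lemma vadd_eq_iff: "vadd c c' = x \<longleftrightarrow> c' = vadd c x"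
  by (auto simp: vadd_def)

lemma vadd_eq_empty_iff: "vadd c c' = {} \<longleftrightarrow> c = c'"
  by (auto simp: vadd_def)

lemma card_symdiff:
  assumes "finite a" "finite b"
  shows "card ((a - b) \<union> (b - a)) + 2 * card (a \<inter> b) = card a + card b"
proof -
  have "card ((a - b) \<union> (b - a)) = card (a - b) + card (b - a)"
    by (rule card_Un_disjoint) (use assms in auto)
  moreover have "card (a - b) + card (a \<inter> b) = card a"
    using card_Int_Diff[of a b] assms by simp
  moreover have "card (b - a) + card (a \<inter> b) = card b"
    using card_Int_Diff[of b a] assms by (simp add: Int_commute)
  ultimately show ?thesis by linarith
qed

lemma character_vadd:
  assumes "finite c" "finite c'"
  shows "((-1::real) ^ card (vadd c c' \<inter> s)) = (-1) ^ card (c \<inter> s) * (-1) ^ card (c' \<inter> s)"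
proof -
  let ?a = "c \<inter> s" and ?b = "c' \<inter> s"
  have e: "vadd c c' \<inter> s = (?a - ?b) \<union> (?b - ?a)" by (auto simp: vadd_def)
  have h: "card ((?a - ?b) \<union> (?b - ?a)) + 2 * card (?a \<inter> ?b) = card ?a + card ?b"
    using assms by (intro card_symdiff) auto
  have "((-1::real) ^ card ?a * (-1) ^ card ?b) = (-1) ^ (card ?a + card ?b)"
    by (simp add: power_add)
  also have "\<dots> = (-1) ^ card ((?a - ?b) \<union> (?b - ?a)) * ((-1)^2) ^ card (?a \<inter> ?b)"
    by (simp only: h[symmetric] power_add power_mult)
  also have "\<dots> = (-1) ^ card ((?a - ?b) \<union> (?b - ?a))" by simp
  finally show ?thesis using e by simp
qed

lemma character_sum_eq_0:
  assumes "x \<in> cube n" "x \<noteq> {}"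
  shows "(\<Sum>s\<in>cube n. (-1::real) ^ card (x \<inter> s)) = 0"
proof -
  obtain i where i: "i \<in> x" using assms by auto
  have iin: "i < n" using assms i by (auto simp: cube_def)
  have fx: "finite x" using assms by (auto simp: cube_def finite_subset)
  define g where "g s = (if i \<in> s then s - {i} else insert i s)" for s
  have flip: "(-1::real) ^ card (x \<inter> g s) = - ((-1) ^ card (x \<inter> s))" for s
  proof (cases "i \<in> s")
    case True
    have "x \<inter> g s = (x \<inter> s) - {i}" using True by (auto simp: g_def)
    moreover have "card ((x \<inter> s) - {i}) = card (x \<inter> s) - 1" using fx i True by simp
    moreover have "x \<inter> s \<noteq> {}" using i True by auto
    then obtain m where "card (x \<inter> s) = Suc m" using fx
      by (metis card_0_eq finite_Int not0_implies_Suc)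
    ultimately show ?thesis by simp
  next
    case False
    have "x \<inter> g s = insert i (x \<inter> s)" using False i by (auto simp: g_def)
    moreover have "card (insert i (x \<inter> s)) = Suc (card (x \<inter> s))" using fx False by simp
    ultimately show ?thesis by simp
  qed
  have gg: "g (g s) = s" for s by (auto simp: g_def)
  let ?S = "\<Sum>s\<in>cube n. (-1::real) ^ card (x \<inter> s)"
  have "?S = (\<Sum>s\<in>cube n. (-1::real) ^ card (x \<inter> g s))"
    by (rule sum.reindex_bij_witness[of _ g g]) (auto simp: gg, auto simp: g_def cube_def iin)
  also have "\<dots> = - ?S" by (simp add: flip sum_negf)
  finally show ?thesis by simp
qed

lemma sum_fourier:
  "(\<Sum>s\<in>cube n. fourier n f s) = f {}"
proof -
  have "(\<Sum>s\<in>cube n. fourier n f s) = (1 / 2 ^ n) * (\<Sum>s\<in>cube n. \<Sum>x\<in>cube n. f x * (-1::real) ^ card (x \<inter> s))"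
    unfolding fourier_def by (simp only: sum_distrib_left)
  also have "(\<Sum>s\<in>cube n. \<Sum>x\<in>cube n. f x * (-1::real) ^ card (x \<inter> s))
      = (\<Sum>x\<in>cube n. \<Sum>s\<in>cube n. f x * (-1::real) ^ card (x \<inter> s))"
    by (rule sum.swap)
  also have "\<dots> = (\<Sum>x\<in>cube n. f x * (\<Sum>s\<in>cube n. (-1::real) ^ card (x \<inter> s)))"
    by (simp only: sum_distrib_left)
  also have "\<dots> = (\<Sum>x\<in>cube n. if x = {} then f {} * 2 ^ n else 0)"
  proof (rule sum.cong[OF refl])
    fix x assume x: "x \<in> cube n"
    show "f x * (\<Sum>s\<in>cube n. (-1::real) ^ card (x \<inter> s)) = (if x = {} then f {} * 2 ^ n else 0)"
    proof (cases "x = {}")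
      case True
      have c: "card (cube n) = 2 ^ n" by (simp add: cube_def card_Pow)
      have "(\<Sum>s\<in>cube n. (-1::real) ^ card (x \<inter> s)) = (\<Sum>s\<in>cube n. 1)"
        using True by simp
      also have "\<dots> = 2 ^ n" using c by simp
      finally show ?thesis using True by simp
    next
      case False
      then show ?thesis using character_sum_eq_0[OF x False] by simp
    qed
  qed
  also have "\<dots> = f {} * 2 ^ n"
  proof -
    have "{} \<in> cube n" by (simp add: cube_def)
    then show ?thesis using sum.delta[of "cube n" "{}" "\<lambda>_. f {} * 2 ^ n"] by simp
  qed
  finally show ?thesis by simp
qed

lemma Del_feasible_sum_le:
  assumes "Del_feasible n d f"
  shows "(\<Sum>x\<in>cube n. f x) \<le> 2 ^ n"
proof -
  have nn: "\<forall>s\<in>cube n. 0 \<le> fourier n f s" and f0: "f {} = 1"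
    using assms by (auto simp: Del_feasible_def)
  have "{} \<in> cube n" by (simp add: cube_def)
  have "fourier n f {} \<le> (\<Sum>s\<in>cube n. fourier n f s)"
    by (rule member_le_sum) (use nn \<open>{} \<in> cube n\<close> in auto)
  also have "\<dots> = 1" using sum_fourier[of n f] f0 by simp
  finally have "fourier n f {} \<le> 1" .
  then show ?thesis by (simp add: fourier_def field_simps)
qed

lemma sum_le_OPT_Del:
  assumes "Del_feasible n d f"
  shows "(\<Sum>x\<in>cube n. f x) \<le> OPT_Del n d"
  unfolding OPT_Del_def
  by (rule cSup_upper) (use assms Del_feasible_sum_le in \<open>auto simp: bdd_above_def\<close>)

lemma sum_le_OPT_DelA:
  assumes "DelA_feasible n d \<A> f"
  shows "(\<Sum>x\<in>cube n. f x) \<le> OPT_DelA n d \<A>"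
  unfolding OPT_DelA_def
proof (rule cSup_upper)
  show "sum f (cube n) \<in> (\<lambda>f. sum f (cube n)) ` {f. DelA_feasible n d \<A> f}" using assms by auto
  let ?K = "\<Sum>x\<in>cube n. 2 ^ n * conv n (indicator \<A>) (indicator \<A>) x :: real"
  have "\<forall>g. DelA_feasible n d \<A> g \<longrightarrow> sum g (cube n) \<le> ?K"
    by (auto simp: DelA_feasible_def intro!: sum_mono)
  then show "bdd_above ((\<lambda>f. sum f (cube n)) ` {f. DelA_feasible n d \<A> f})"
    by (auto simp: bdd_above_def)
qed

definition difference_count :: "nat set set \<Rightarrow> nat set \<Rightarrow> real" where
  "difference_count C x = (\<Sum>c\<in>C. \<Sum>c'\<in>C. if vadd c c' = x then 1 else 0)"

lemma difference_count_nonneg: "0 \<le> difference_count C x"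
  unfolding difference_count_def by (intro sum_nonneg) auto

lemma difference_count_empty:
  assumes "finite C"
  shows "difference_count C {} = card C"
  unfolding difference_count_def vadd_eq_empty_iff by (simp add: sum.delta assms)

lemma difference_count_eq_sum_indicator:
  assumes "finite C"
  shows "difference_count C x = (\<Sum>c\<in>C. indicator C (vadd c x))"
  unfolding difference_count_def vadd_eq_iff
  by (intro sum.cong refl) (simp add: sum.delta assms indicator_def)

lemma sum_difference_count_mult:
  assumes "C \<subseteq> cube n"
  shows "(\<Sum>x\<in>cube n. difference_count C x * g x) = (\<Sum>c\<in>C. \<Sum>c'\<in>C. g (vadd c c'))"
proof -
  have "(\<Sum>x\<in>cube n. difference_count C x * g x)
      = (\<Sum>x\<in>cube n. \<Sum>c\<in>C. \<Sum>c'\<in>C. if vadd c c' = x then g x else 0)"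
    unfolding difference_count_def sum_distrib_right by (intro sum.cong refl) simp
  also have "\<dots> = (\<Sum>c\<in>C. \<Sum>c'\<in>C. \<Sum>x\<in>cube n. if vadd c c' = x then g x else 0)"
    by (subst sum.swap) (intro sum.cong refl sum.swap)
  also have "\<dots> = (\<Sum>c\<in>C. \<Sum>c'\<in>C. g (vadd c c'))"
    using assms by (intro sum.cong refl) (auto simp: sum.delta intro!: vadd_cube)
  finally show ?thesis .
qed

lemma sum_difference_count:
  assumes "C \<subseteq> cube n"
  shows "(\<Sum>x\<in>cube n. difference_count C x) = real (card C) ^ 2"
  using sum_difference_count_mult[OF assms, of "\<lambda>_. 1"] by (simp add: power2_eq_square)

lemma fourier_difference_count:
  assumes "C \<subseteq> cube n"
  shows "fourier n (difference_count C) s = (\<Sum>c\<in>C. (-1::real) ^ card (c \<inter> s))\<^sup>2 / 2 ^ n"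
proof -
  have fin: "finite c" if "c \<in> C" for c
    using that assms by (auto simp: cube_def finite_subset)
  have "(\<Sum>x\<in>cube n. difference_count C x * (-1) ^ card (x \<inter> s))
      = (\<Sum>c\<in>C. \<Sum>c'\<in>C. (-1::real) ^ card (vadd c c' \<inter> s))"
    by (rule sum_difference_count_mult[OF assms])
  also have "\<dots> = (\<Sum>c\<in>C. \<Sum>c'\<in>C. (-1::real) ^ card (c \<inter> s) * (-1) ^ card (c' \<inter> s))"
    by (intro sum.cong refl character_vadd fin)
  also have "\<dots> = (\<Sum>c\<in>C. (-1::real) ^ card (c \<inter> s))\<^sup>2"
    by (simp add: power2_eq_square sum_product)
  finally show ?thesis by (simp add: fourier_def)
qed

lemma difference_count_eq_0:
  assumes "is_code_in n d \<A> C" and "1 \<le> weight x" and "weight x \<le> d - 1"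
  shows "difference_count C x = 0"
proof -
  have "vadd c c' \<noteq> x" if "c \<in> C" "c' \<in> C" for c c'
  proof
    assume x: "vadd c c' = x"
    with assms(2) have "c \<noteq> c'" by (auto simp: weight_def vadd_def)
    with that assms(1) have "d \<le> hdist c c'" by (auto simp: is_code_in_def)
    with assms(2,3) show False by (simp add: hdist_def x)
  qed
  then show ?thesis unfolding difference_count_def by simp
qed

lemma difference_count_le_autocorrelation:
  assumes "C \<subseteq> \<A>" and "C \<subseteq> cube n"
  shows "difference_count C x \<le> 2 ^ n * conv n (indicator \<A>) (indicator \<A>) x"
proof -
  have "finite C" using assms(2) finite_subset finite_cube by blast
  then have "difference_count C x = (\<Sum>c\<in>C. indicator C (vadd c x))"
    by (rule difference_count_eq_sum_indicator)
  also have "\<dots> \<le> (\<Sum>c\<in>C. indicator \<A> c * indicator \<A> (vadd x c))"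
    using assms(1) by (intro sum_mono) (auto simp: indicator_def vadd_comm)
  also have "\<dots> \<le> (\<Sum>c\<in>cube n. indicator \<A> c * indicator \<A> (vadd x c))"
    using assms(2) by (intro sum_mono2) (auto simp: indicator_def)
  finally show ?thesis by (simp add: conv_def)
qed

lemma card_code_le_OPT_Del:
  assumes C: "is_code_in n d \<A> C"
  shows "real (card C) \<le> OPT_Del n d"
proof -
  define M where "M = real (card C)"
  have Cc: "C \<subseteq> cube n" using C by (auto simp: is_code_in_def)
  then have "finite C" using finite_subset finite_cube by blast
  with C have M: "M > 0" by (auto simp: M_def is_code_in_def card_gt_0_iff)
  have "fourier n (\<lambda>x. difference_count C x / M) s = fourier n (difference_count C) s / M" for s
    unfolding fourier_def by (simp add: sum_divide_distrib mult.commute)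
  then have "Del_feasible n d (\<lambda>x. difference_count C x / M)"
    unfolding Del_feasible_def
    using M difference_count_nonneg difference_count_eq_0[OF C] difference_count_empty[OF \<open>finite C\<close>]
    by (auto simp: fourier_difference_count[OF Cc] M_def)
  from sum_le_OPT_Del[OF this] have "M\<^sup>2 / M \<le> OPT_Del n d"
    by (simp add: sum_divide_distrib[symmetric] sum_difference_count[OF Cc] M_def)
  then show ?thesis using M by (simp add: power2_eq_square M_def)
qed

lemma DelA_feasible_difference_count:
  assumes C: "is_code_in n d \<A> C"
  shows "DelA_feasible n d \<A> (difference_count C)"
proof -
  have Cc: "C \<subseteq> cube n" and CA: "C \<subseteq> \<A>" using C by (auto simp: is_code_in_def)
  then have "finite C" using finite_subset finite_cube by blast
  then show ?thesis
    unfolding DelA_feasible_def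
    using difference_count_nonneg difference_count_eq_0[OF C] difference_count_empty
      card_code_le_OPT_Del[OF C] difference_count_le_autocorrelation[OF CA Cc]
    by (auto simp: fourier_difference_count[OF Cc])
qed

lemma A_code_attained:
  assumes "\<A> \<subseteq> cube n" and "a \<in> \<A>"
  obtains C where "is_code_in n d \<A> C" and "A_code n d \<A> = card C"
proof -
  let ?Cs = "{C. is_code_in n d \<A> C}"
  have "finite ?Cs"
    by (rule finite_subset[of _ "Pow (cube n)"]) (auto simp: is_code_in_def)
  moreover have "is_code_in n d \<A> {a}" using assms by (auto simp: is_code_in_def)
  ultimately have "A_code n d \<A> \<in> card ` ?Cs"
    unfolding A_code_def by (intro Max_in) auto
  then show ?thesis using that by auto
qed

theorem mainTheorem2:
  fixes n d :: nat and \<A> :: "nat set set"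
  assumes "1 \<le> n" and "1 \<le> d" and "d \<le> n"
    and "\<A> \<subseteq> cube n" and "\<A> \<noteq> {}"
  shows "real (A_code n d \<A>) \<le> sqrt (OPT_DelA n d \<A>)"
proof -
  obtain a where "a \<in> \<A>" using assms(5) by auto
  then obtain C where C: "is_code_in n d \<A> C" and AC: "A_code n d \<A> = card C"
    using A_code_attained[OF assms(4)] by blast
  have "C \<subseteq> cube n" using C by (auto simp: is_code_in_def)
  then have "real (card C) ^ 2 \<le> OPT_DelA n d \<A>"
    using sum_le_OPT_DelA[OF DelA_feasible_difference_count[OF C]] sum_difference_count by simp
  then have "sqrt (real (card C) ^ 2) \<le> sqrt (OPT_DelA n d \<A>)"
    by (rule real_sqrt_le_mono)
  then show ?thesis by (simp add: AC)
qed

end
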